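(* Assume $\overline{P}^d\ge\overline{P}^d_e$ replaced by $\overline{P}^d_e$ and $\overline{P}^c$ by $\overline{P}^c_e$ is allowed (this does not change $\mathcal{P}^{0\text{-}1}$). For every $t\in\{1,\ldots,T\}$ and $\overline{\tau}\in\{0,\ldots,T-t\}$, every $(p^d,p^c,s,u)\in\mathcal{P}^{0\text{-}1}$ satisfies $$\sum_{\tau=0}^{\overline{\tau}}p^c_{t+\tau}+\sum_{\tau=0}^{\overline{\tau}}\rho^c(t,\tau,\overline{\tau})(1-u_{t+\tau})\le\sum_{\tau=0}^{\overline{\tau}}c(t,\tau)$$ and $$\sum_{\tau=0}^{\overline{\tau}}p^d_{t+\tau}+\sum_{\tau=0}^{\overline{\tau}}\rho^d(t,\tau,\overline{\tau})\,u_{t+\tau}\le\sum_{\tau=0}^{\overline{\tau}}d(t,\tau).$$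
   Context: Let $T\ge1$, $\Delta>0$, $\eta_c,\eta_d\in(0,1]$, $\overline{P}^d,\overline{P}^c>0$, $\underline{S}<\overline{S}$, $s_0\in[\underline{S},\overline{S}]$. $\mathcal{P}^{0\text{-}1}$ is the set of $(p^d,p^c,s)\in(\mathbb{R}^T_{\ge0})^3$, $u\in\{0,1\}^T$ with $p^d_t\le\overline{P}^d(1-u_t)$, $p^c_t\le\overline{P}^cu_t$, $\underline{S}\le s_t\le\overline{S}$, $s_t=s_{t-1}+\Delta(\eta_cp^c_t-p^d_t/\eta_d)$ for $t=1,\ldots,T$. Let $\overline{P}^d_e=\min\{\overline{P}^d,\eta_d(\overline{S}-\underline{S})/\Delta\}$, $\overline{P}^c_e=\min\{\overline{P}^c,(\overline{S}-\underline{S})/(\Delta\eta_c)\}$, $[x]^+=\max\{x,0\}$. Set $\underline{s}_0(0)=\overline{s}_0(0)=s_0$, $\underline{s}_0(t)=\max\{\underline{s}_0(t-1)-\Delta\overline{P}^d_e/\eta_d,\underline{S}\}$, $\overline{s}_0(t)=\min\{\overline{s}_0(t-1)+\Delta\eta_c\overline{P}^c_e,\overline{S}\}$ for $t=1,\ldots,T-1$. For $t=1..T$, $\overline{\tau}=0..T-t$: $c(t,\overline{\tau})=\min\{\overline{P}^c_e,[(\overline{S}-\underline{s}_0(t-1))/(\Delta\eta_c)-\overline{\tau}\overline{P}^c_e]^+\}$, $d(t,\overline{\tau})=\min\{\overline{P}^d_e,[(\overline{s}_0(t-1)-\underline{S})\eta_d/\Delta-\overline{\tau}\overline{P}^d_e]^+\}$.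 For $\tau=0..T-2$: $\overline{c}(\tau)=\min\{\overline{P}^c_e,[(\overline{S}-\underline{S})/(\Delta\eta_c)-\tau\overline{P}^c_e]^+\}$, $\overline{d}(\tau)=\min\{\overline{P}^d_e,[(\overline{S}-\underline{S})\eta_d/\Delta-\tau\overline{P}^d_e]^+\}$. $\overline{P}^c_e(t)=c(t,0)$, $\overline{P}^d_e(t)=d(t,0)$. For $\tau=0,\ldots,\overline{\tau}$: $\rho^c(t,\tau,\overline{\tau})=\max\{-\overline{P}^d_e(t+\tau)/(\eta_d\eta_c),\sum_{j=\tau}^{\overline{\tau}}c(t,j)-\sum_{j=0}^{\overline{\tau}-\tau-1}\overline{c}(j)\}$, $\rho^d(t,\tau,\overline{\tau})=\max\{-\eta_d\eta_c\overline{P}^c_e(t+\tau),\sum_{j=\tau}^{\overline{\tau}}d(t,j)-\sum_{j=0}^{\overline{\tau}-\tau-1}\overline{d}(j)\}$ (empty sums $=0$). *)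

theory Defs
  imports Main "HOL.Real"
begin

text \<open>Parameters are always passed in the order
  Dt (time step Delta), etac, etad, Pd (max discharge), Pc (max charge), Smin, Smax, s0.
  Time indices of the vectors p^d, p^c, s, u are 1..T; vectors are functions nat => real.\<close>

definition pos :: "real \<Rightarrow> real" where
  "pos x = max x 0"

definition Pde :: "real \<Rightarrow> real \<Rightarrow> real \<Rightarrow> real \<Rightarrow> real \<Rightarrow> real \<Rightarrow> real \<Rightarrow> real \<Rightarrow> real" where
  "Pde Dt etac etad Pd Pc Smin Smax s0 = min Pd (etad * (Smax - Smin) / Dt)"

definition Pce :: "real \<Rightarrow> real \<Rightarrow> real \<Rightarrow> real \<Rightarrow> real \<Rightarrow> real \<Rightarrow> real \<Rightarrow> real \<Rightarrow> real" where
  "Pce Dt etac etad Pd Pc Smin Smax s0 = min Pc ((Smax - Smin) / (Dt * etac))"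

fun slow :: "real \<Rightarrow> real \<Rightarrow> real \<Rightarrow> real \<Rightarrow> real \<Rightarrow> real \<Rightarrow> real \<Rightarrow> real \<Rightarrow> nat \<Rightarrow> real" where
  "slow Dt etac etad Pd Pc Smin Smax s0 0 = s0"
| "slow Dt etac etad Pd Pc Smin Smax s0 (Suc t) =
     max (slow Dt etac etad Pd Pc Smin Smax s0 t - Dt * Pde Dt etac etad Pd Pc Smin Smax s0 / etad) Smin"

fun supp :: "real \<Rightarrow> real \<Rightarrow> real \<Rightarrow> real \<Rightarrow> real \<Rightarrow> real \<Rightarrow> real \<Rightarrow> real \<Rightarrow> nat \<Rightarrow> real" where
  "supp Dt etac etad Pd Pc Smin Smax s0 0 = s0"
| "supp Dt etac etad Pd Pc Smin Smax s0 (Suc t) =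
     min (supp Dt etac etad Pd Pc Smin Smax s0 t + Dt * etac * Pce Dt etac etad Pd Pc Smin Smax s0) Smax"

definition cc :: "real \<Rightarrow> real \<Rightarrow> real \<Rightarrow> real \<Rightarrow> real \<Rightarrow> real \<Rightarrow> real \<Rightarrow> real \<Rightarrow> nat \<Rightarrow> nat \<Rightarrow> real" where
  "cc Dt etac etad Pd Pc Smin Smax s0 t taub =
     min (Pce Dt etac etad Pd Pc Smin Smax s0)
         (pos ((Smax - slow Dt etac etad Pd Pc Smin Smax s0 (t - 1)) / (Dt * etac)
               - real taub * Pce Dt etac etad Pd Pc Smin Smax s0))"

definition dd :: "real \<Rightarrow> real \<Rightarrow> real \<Rightarrow> real \<Rightarrow> real \<Rightarrow> real \<Rightarrow> real \<Rightarrow> real \<Rightarrow> nat \<Rightarrow> nat \<Rightarrow> real" where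
  "dd Dt etac etad Pd Pc Smin Smax s0 t taub =
     min (Pde Dt etac etad Pd Pc Smin Smax s0)
         (pos ((supp Dt etac etad Pd Pc Smin Smax s0 (t - 1) - Smin) * etad / Dt
               - real taub * Pde Dt etac etad Pd Pc Smin Smax s0))"

definition cbar :: "real \<Rightarrow> real \<Rightarrow> real \<Rightarrow> real \<Rightarrow> real \<Rightarrow> real \<Rightarrow> real \<Rightarrow> real \<Rightarrow> nat \<Rightarrow> real" where
  "cbar Dt etac etad Pd Pc Smin Smax s0 tau =
     min (Pce Dt etac etad Pd Pc Smin Smax s0)
         (pos ((Smax - Smin) / (Dt * etac) - real tau * Pce Dt etac etad Pd Pc Smin Smax s0))"

definition dbar :: "real \<Rightarrow> real \<Rightarrow> real \<Rightarrow> real \<Rightarrow> real \<Rightarrow> real \<Rightarrow> real \<Rightarrow> real \<Rightarrow> nat \<Rightarrow> real" where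
  "dbar Dt etac etad Pd Pc Smin Smax s0 tau =
     min (Pde Dt etac etad Pd Pc Smin Smax s0)
         (pos ((Smax - Smin) * etad / Dt - real tau * Pde Dt etac etad Pd Pc Smin Smax s0))"

text \<open>rho^c(t,tau,taub) and rho^d(t,tau,taub); P^c_e(t) = c(t,0), P^d_e(t) = d(t,0).
  The sum over j = 0 .. taub - tau - 1 is written over {..< taub - tau} (empty when tau = taub).\<close>
definition rhoc :: "real \<Rightarrow> real \<Rightarrow> real \<Rightarrow> real \<Rightarrow> real \<Rightarrow> real \<Rightarrow> real \<Rightarrow> real \<Rightarrow> nat \<Rightarrow> nat \<Rightarrow> nat \<Rightarrow> real" where
  "rhoc Dt etac etad Pd Pc Smin Smax s0 t tau taub =
     max (- dd Dt etac etad Pd Pc Smin Smax s0 (t + tau) 0 / (etad * etac))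
         ((\<Sum>j\<in>{tau..taub}. cc Dt etac etad Pd Pc Smin Smax s0 t j)
          - (\<Sum>j\<in>{..<taub - tau}. cbar Dt etac etad Pd Pc Smin Smax s0 j))"

definition rhod :: "real \<Rightarrow> real \<Rightarrow> real \<Rightarrow> real \<Rightarrow> real \<Rightarrow> real \<Rightarrow> real \<Rightarrow> real \<Rightarrow> nat \<Rightarrow> nat \<Rightarrow> nat \<Rightarrow> real" where
  "rhod Dt etac etad Pd Pc Smin Smax s0 t tau taub =
     max (- (etad * etac) * cc Dt etac etad Pd Pc Smin Smax s0 (t + tau) 0)
         ((\<Sum>j\<in>{tau..taub}. dd Dt etac etad Pd Pc Smin Smax s0 t j)
          - (\<Sum>j\<in>{..<taub - tau}. dbar Dt etac etad Pd Pc Smin Smax s0 j))"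

definition in_P01 :: "nat \<Rightarrow> real \<Rightarrow> real \<Rightarrow> real \<Rightarrow> real \<Rightarrow> real \<Rightarrow> real \<Rightarrow> real \<Rightarrow> real \<Rightarrow>
    (nat \<Rightarrow> real) \<Rightarrow> (nat \<Rightarrow> real) \<Rightarrow> (nat \<Rightarrow> real) \<Rightarrow> (nat \<Rightarrow> real) \<Rightarrow> bool" where
  "in_P01 T Dt etac etad Pd Pc Smin Smax s0 pd pc s u \<longleftrightarrow>
     (\<forall>t\<in>{1..T}.
        0 \<le> pd t \<and> 0 \<le> pc t \<and> 0 \<le> s t \<and> (u t = 0 \<or> u t = 1) \<and>
        pd t \<le> Pd * (1 - u t) \<and> pc t \<le> Pc * u t \<and>
        Smin \<le> s t \<and> s t \<le> Smax \<and>
        s t = (if t = 1 then s0 else s (t - 1)) + Dt * (etac * pc t - pd t / etad))"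

end

theory Submission
  imports Defs
begin

text \<open>
  Normalise energies by \<open>\<Delta> \<eta>\<^sub>c\<close> and put \<open>P = P\<^sup>c\<^sub>e\<close>, \<open>K = (Smax - s_low (t - 1)) / (\<Delta> \<eta>\<^sub>c)\<close> (the room
  left for charging at best) and \<open>M = (Smax - Smin) / (\<Delta> \<eta>\<^sub>c)\<close>.  The numbers \<open>c(t,j)\<close> cut \<open>K\<close>
  into slices of size \<open>P\<close>, and \<open>c\<^sup>-(j)\<close> cut \<open>M\<close>, so \<open>\<rho>\<^sup>c(t,\<tau>,\<tau>')\<close> is the larger of
  \<open>-d(t+\<tau>,0)/(\<eta>\<^sub>d \<eta>\<^sub>c)\<close> and the reserve \<open>min ((\<tau>'+1) P) K - min (\<tau> P) K - min ((\<tau>'-\<tau>) P) M\<close>.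
  Every summand on the left is then bounded by the increment of the normalised state of
  charge or by the reserve.  Before the last period that needs the reserve the sum is at most
  \<open>min (\<tau> P) K\<close> (induction), after it the increments telescope to at most \<open>min ((\<tau>'-\<tau>) P) M\<close>,
  and the reserve closes the gap to \<open>min ((\<tau>'+1) P) K = \<Sum> c(t,j)\<close>.  Discharging is charging of
  the reflected storage \<open>s \<mapsto> Smax - s\<close>.
\<close>

lemma sum_min_pos_slices:
  fixes P K :: real
  assumes "0 \<le> P" "0 \<le> K"
  shows "(\<Sum>j<m. min P (pos (K - real j * P))) = min (real m * P) K"
proof (induction m)
  case 0
  then show ?case using assms by simp
next
  case (Suc m)
  have "min (real m * P) K + min P (pos (K - real m * P)) = min (real (Suc m) * P) K"
    using assms by (auto simp: pos_def min_def max_def algebra_simps)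
  then show ?case using Suc by simp
qed

definition reserve :: "real \<Rightarrow> real \<Rightarrow> real \<Rightarrow> nat \<Rightarrow> nat \<Rightarrow> real" where
  "reserve P K M n \<tau> = min (real (Suc n) * P) K - min (real \<tau> * P) K - min (real (n - \<tau>) * P) M"

lemma reserve_le:
  assumes "0 \<le> P" "0 \<le> K" "K \<le> M" "\<tau> \<le> n"
  shows "reserve P K M n \<tau> \<le> P"
proof -
  have "min (a + b + P) K - min a K - min b M \<le> P" if "0 \<le> a" "0 \<le> b" for a b :: real
    using that assms by (simp add: min_def)
  moreover have "real (Suc n) * P = real \<tau> * P + real (n - \<tau>) * P + P"
    using \<open>\<tau> \<le> n\<close> by (simp add: of_nat_diff algebra_simps)
  ultimately show ?thesis
    unfolding reserve_def using \<open>0 \<le> P\<close> by simp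
qed

text \<open>Split the sum at the last \<tau> where the bound on \<open>w \<tau>\<close> comes from the reserve term:
  the part before it is handled by induction, the part after it telescopes.\<close>

lemma sum_le_min_of_telescoping_or_reserve:
  fixes w f :: "nat \<Rightarrow> real" and n :: nat and P K M :: real
  assumes P: "0 \<le> P" and K: "0 \<le> K" "K \<le> M"
    and incr_le: "\<And>\<tau>. \<tau> \<le> n \<Longrightarrow> f (Suc \<tau>) - f \<tau> \<le> P"
    and w_le: "\<And>\<tau>. \<tau> \<le> n \<Longrightarrow> w \<tau> \<le> max (f (Suc \<tau>) - f \<tau>) (reserve P K M n \<tau>)"
    and rise_le_K: "\<And>m. m \<le> Suc n \<Longrightarrow> f m - f 0 \<le> K"
    and rise_le_M: "\<And>a b. a \<le> b \<Longrightarrow> b \<le> Suc n \<Longrightarrow> f b - f a \<le> M"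
  shows "(\<Sum>\<tau>\<le>n. w \<tau>) \<le> min (real (Suc n) * P) K"
proof -
  have w_le_P: "w \<tau> \<le> P" if "\<tau> \<le> n" for \<tau>
    using w_le[OF that] incr_le[OF that] reserve_le[OF P K that] by linarith
  have sum_le_length: "(\<Sum>\<tau>\<in>{a..<m}. w \<tau>) \<le> real (m - a) * P" if "m \<le> Suc n" for a m
    using sum_mono[of "{a..<m}" w "\<lambda>_. P"] w_le_P that by fastforce
  have sum_le_K: "(\<Sum>\<tau><m. w \<tau>) \<le> K" if "m \<le> Suc n" for m
    using that
  proof (induction m rule: less_induct)
    case (less m)
    show ?case
    proof (cases "\<forall>\<tau><m. w \<tau> \<le> f (Suc \<tau>) - f \<tau>")
      case True
      have "(\<Sum>\<tau><m. w \<tau>) \<le> (\<Sum>\<tau><m. f (Suc \<tau>) - f \<tau>)"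
        using True by (intro sum_mono) auto
      also have "\<dots> = f m - f 0"
        using sum_Suc_diff'[of 0 m f] by (simp add: atLeast0LessThan)
      finally show ?thesis using rise_le_K[OF less.prems] by linarith
    next
      case False
      define bad where "bad = {\<tau>. \<tau> < m \<and> \<not> w \<tau> \<le> f (Suc \<tau>) - f \<tau>}"
      define t0 where "t0 = Max bad"
      have "finite bad" "bad \<noteq> {}" using False unfolding bad_def by auto
      then have "t0 \<in> bad" and last: "\<And>\<tau>. \<tau> \<in> bad \<Longrightarrow> \<tau> \<le> t0"
        unfolding t0_def by auto
      then have t0: "t0 < m" "\<not> w t0 \<le> f (Suc t0) - f t0" unfolding bad_def by auto
      have head: "(\<Sum>\<tau><t0. w \<tau>) \<le> min (real t0 * P) K"
        using less.IH[of t0] t0 less.prems sum_le_length[of t0 0] by (simp add: lessThan_atLeast0)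
      have mid: "w t0 \<le> reserve P K M n t0"
        using w_le[of t0] t0 less.prems by linarith
      have "(\<Sum>\<tau>\<in>{Suc t0..<m}. w \<tau>) \<le> (\<Sum>\<tau>\<in>{Suc t0..<m}. f (Suc \<tau>) - f \<tau>)"
        using last by (intro sum_mono) (force simp: bad_def)
      also have "\<dots> = f m - f (Suc t0)" using t0 by (intro sum_Suc_diff') simp
      finally have tail: "(\<Sum>\<tau>\<in>{Suc t0..<m}. w \<tau>) \<le> min (real (n - t0) * P) M"
        using rise_le_M[of "Suc t0" m] sum_le_length[of m "Suc t0"] t0 less.prems P
          mult_right_mono[of "real (m - Suc t0)" "real (n - t0)" P]
        by (simp add: of_nat_diff)
      have "(\<Sum>\<tau><m. w \<tau>) = (\<Sum>\<tau><t0. w \<tau>) + w t0 + (\<Sum>\<tau>\<in>{Suc t0..<m}. w \<tau>)"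
        using sum.atLeastLessThan_concat[of 0 "Suc t0" m w] t0 by (simp add: lessThan_atLeast0)
      then show ?thesis using head mid tail unfolding reserve_def by linarith
    qed
  qed
  show ?thesis
    unfolding lessThan_Suc_atMost[symmetric]
    using sum_le_K[of "Suc n"] sum_le_length[of "Suc n" 0] by (simp add: atLeast0LessThan)
qed

text \<open>Reflecting the state of charge, \<open>s \<mapsto> c - s\<close> and \<open>u \<mapsto> 1 - u\<close>, turns discharging into
  charging with efficiencies \<open>1 / \<eta>\<^sub>d\<close> and \<open>1 / \<eta>\<^sub>c\<close>.\<close>

lemma Pce_mirror:
  "Pce Dt (1 / etad) (1 / etac) Pc Pd (c - Smax) (c - Smin) (c - s0) = Pde Dt etac etad Pd Pc Smin Smax s0"
  by (simp add: Pce_def Pde_def ac_simps)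

lemma Pde_mirror:
  "Pde Dt (1 / etad) (1 / etac) Pc Pd (c - Smax) (c - Smin) (c - s0) = Pce Dt etac etad Pd Pc Smin Smax s0"
  by (simp add: Pce_def Pde_def ac_simps)

lemma slow_mirror:
  "slow Dt (1 / etad) (1 / etac) Pc Pd (c - Smax) (c - Smin) (c - s0) k = c - supp Dt etac etad Pd Pc Smin Smax s0 k"
  by (induction k) (auto simp: Pde_mirror max_def min_def algebra_simps)

lemma supp_mirror:
  "supp Dt (1 / etad) (1 / etac) Pc Pd (c - Smax) (c - Smin) (c - s0) k = c - slow Dt etac etad Pd Pc Smin Smax s0 k"
  by (induction k) (auto simp: Pce_mirror max_def min_def algebra_simps)

lemma cc_mirror:
  "cc Dt (1 / etad) (1 / etac) Pc Pd (c - Smax) (c - Smin) (c - s0) t j = dd Dt etac etad Pd Pc Smin Smax s0 t j"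
  by (simp add: cc_def dd_def Pce_mirror slow_mirror)

lemma dd_mirror:
  "dd Dt (1 / etad) (1 / etac) Pc Pd (c - Smax) (c - Smin) (c - s0) t j = cc Dt etac etad Pd Pc Smin Smax s0 t j"
  by (simp add: cc_def dd_def Pde_mirror supp_mirror ac_simps)

lemma cbar_mirror:
  "cbar Dt (1 / etad) (1 / etac) Pc Pd (c - Smax) (c - Smin) (c - s0) j = dbar Dt etac etad Pd Pc Smin Smax s0 j"
  by (simp add: cbar_def dbar_def Pce_mirror)

lemma rhoc_mirror:
  "rhoc Dt (1 / etad) (1 / etac) Pc Pd (c - Smax) (c - Smin) (c - s0) t j n = rhod Dt etac etad Pd Pc Smin Smax s0 t j n"
  by (simp add: rhoc_def rhod_def cc_mirror dd_mirror cbar_mirror ac_simps)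

lemma in_P01_mirror:
  assumes "in_P01 T Dt etac etad Pd Pc Smin Smax s0 pd pc s u" and "Smax \<le> c"
  shows "in_P01 T Dt (1 / etad) (1 / etac) Pc Pd (c - Smax) (c - Smin) (c - s0) pc pd (\<lambda>k. c - s k) (\<lambda>k. 1 - u k)"
  using assms unfolding in_P01_def by (auto simp: algebra_simps)

locale storage_schedule =
  fixes T :: nat and Dt etac etad Pd Pc Smin Smax s0 :: real
    and pd pc s u :: "nat \<Rightarrow> real"
  assumes Dt_pos: "0 < Dt" and etac_pos: "0 < etac" and etad_pos: "0 < etad"
    and Pd_pos: "0 < Pd" and Pc_pos: "0 < Pc"
    and Smin_less_Smax: "Smin < Smax" and s0_bounds: "Smin \<le> s0" "s0 \<le> Smax"
    and feasible: "in_P01 T Dt etac etad Pd Pc Smin Smax s0 pd pc s u"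
begin

abbreviation "Pc_e \<equiv> Pce Dt etac etad Pd Pc Smin Smax s0"
abbreviation "Pd_e \<equiv> Pde Dt etac etad Pd Pc Smin Smax s0"
abbreviation "s_low \<equiv> slow Dt etac etad Pd Pc Smin Smax s0"
abbreviation "s_up \<equiv> supp Dt etac etad Pd Pc Smin Smax s0"
abbreviation "cap_c \<equiv> cc Dt etac etad Pd Pc Smin Smax s0"
abbreviation "cap_d \<equiv> dd Dt etac etad Pd Pc Smin Smax s0"

definition soc :: "nat \<Rightarrow> real" where
  "soc k = (if k = 0 then s0 else s k)"

lemma feasible_at:
  assumes "1 \<le> k" "k \<le> T"
  shows "0 \<le> pd k" "0 \<le> pc k" "u k = 0 \<or> u k = 1"
    "pd k \<le> Pd * (1 - u k)" "pc k \<le> Pc * u k"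
    "Smin \<le> soc k" "soc k \<le> Smax"
    "soc k = soc (k - 1) + Dt * (etac * pc k - pd k / etad)"
  using feasible assms unfolding in_P01_def soc_def by (auto dest!: bspec[of _ _ k])

lemma soc_bounds: "k \<le> T \<Longrightarrow> Smin \<le> soc k \<and> soc k \<le> Smax"
  using feasible_at[of k] s0_bounds by (cases "k = 0") (auto simp: soc_def)

lemma pd_eq_0_if_charging: "1 \<le> k \<Longrightarrow> k \<le> T \<Longrightarrow> u k = 1 \<Longrightarrow> pd k = 0"
  using feasible_at[of k] by auto

lemma pc_eq_0_if_not_charging: "1 \<le> k \<Longrightarrow> k \<le> T \<Longrightarrow> u k = 0 \<Longrightarrow> pc k = 0"
  using feasible_at[of k] by auto

lemma pc_le_headroom:
  assumes "1 \<le> k" "k \<le> T"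
  shows "pc k \<le> (Smax - soc (k - 1)) / (Dt * etac)"
proof (cases "u k = 1")
  case True
  then have "soc k = soc (k - 1) + Dt * etac * pc k"
    using feasible_at(8)[OF assms] pd_eq_0_if_charging[OF assms] by simp
  then show ?thesis
    using feasible_at(7)[OF assms] Dt_pos etac_pos by (simp add: field_simps)
next
  case False
  then show ?thesis
    using feasible_at(3)[OF assms] pc_eq_0_if_not_charging[OF assms] soc_bounds[of "k - 1"]
      assms Dt_pos etac_pos by auto
qed

lemma pd_le_stored_energy:
  assumes "1 \<le> k" "k \<le> T"
  shows "pd k \<le> etad * (soc (k - 1) - Smin) / Dt"
proof (cases "u k = 0")
  case True
  then have "soc k = soc (k - 1) - Dt * pd k / etad"
    using feasible_at(8)[OF assms] pc_eq_0_if_not_charging[OF assms] by simp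
  then have "Dt * pd k / etad \<le> soc (k - 1) - Smin"
    using feasible_at(6)[OF assms] by linarith
  then show ?thesis
    using Dt_pos etad_pos by (simp add: field_simps)
next
  case False
  then show ?thesis
    using feasible_at(3)[OF assms] pd_eq_0_if_charging[OF assms] soc_bounds[of "k - 1"]
      assms Dt_pos etad_pos by auto
qed

lemma Pc_e_nonneg: "0 \<le> Pc_e"
  unfolding Pce_def using Pc_pos etac_pos Smin_less_Smax Dt_pos by simp

lemma Pd_e_nonneg: "0 \<le> Pd_e"
  unfolding Pde_def using Pd_pos etad_pos Smin_less_Smax Dt_pos by simp

lemma pc_le_Pc_e:
  assumes "1 \<le> k" "k \<le> T"
  shows "pc k \<le> Pc_e"
proof -
  have "pc k \<le> Pc"
    using feasible_at[OF assms] Pc_pos by (auto simp: mult_le_cancel_left1)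
  moreover have "(Smax - soc (k - 1)) / (Dt * etac) \<le> (Smax - Smin) / (Dt * etac)"
    using soc_bounds[of "k - 1"] assms Dt_pos etac_pos by (simp add: divide_right_mono)
  ultimately show ?thesis
    using pc_le_headroom[OF assms] unfolding Pce_def by simp
qed

lemma pd_le_Pd_e:
  assumes "1 \<le> k" "k \<le> T"
  shows "pd k \<le> Pd_e"
proof -
  have "pd k \<le> Pd"
    using feasible_at[OF assms] Pd_pos by (auto simp: algebra_simps)
  moreover have "etad * (soc (k - 1) - Smin) / Dt \<le> etad * (Smax - Smin) / Dt"
    using soc_bounds[of "k - 1"] assms Dt_pos etad_pos by (simp add: divide_right_mono)
  ultimately show ?thesis
    using pd_le_stored_energy[OF assms] unfolding Pde_def by simp
qed

lemma s_low_le_soc: "k \<le> T \<Longrightarrow> s_low k \<le> soc k"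
proof (induction k)
  case 0
  then show ?case by (simp add: soc_def)
next
  case (Suc k)
  have "Dt * (pd (Suc k) / etad) \<le> Dt * (Pd_e / etad)"
    using pd_le_Pd_e[of "Suc k"] Suc.prems Dt_pos etad_pos by (simp add: divide_right_mono)
  moreover have "0 \<le> Dt * (etac * pc (Suc k))"
    using feasible_at(2)[of "Suc k"] Suc.prems Dt_pos etac_pos by simp
  ultimately show ?case
    using feasible_at(6,8)[of "Suc k"] Suc by (simp add: algebra_simps)
qed

lemma soc_le_s_up: "k \<le> T \<Longrightarrow> soc k \<le> s_up k"
proof (induction k)
  case 0
  then show ?case by (simp add: soc_def)
next
  case (Suc k)
  have "Dt * etac * pc (Suc k) \<le> Dt * etac * Pc_e"
    using pc_le_Pc_e[of "Suc k"] Suc.prems Dt_pos etac_pos by simp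
  moreover have "0 \<le> Dt * (pd (Suc k) / etad)"
    using feasible_at(1)[of "Suc k"] Suc.prems Dt_pos etad_pos by simp
  ultimately show ?case
    using feasible_at(7,8)[of "Suc k"] Suc by (simp add: algebra_simps)
qed

lemma s_low_bounds: "Smin \<le> s_low k \<and> s_low k \<le> Smax"
proof (induction k)
  case 0
  then show ?case using s0_bounds by simp
next
  case (Suc k)
  have "0 \<le> Dt * Pd_e / etad" using Dt_pos etad_pos Pd_e_nonneg by simp
  then show ?case using Suc Smin_less_Smax by auto
qed

lemma pd_le_cap_d:
  assumes "1 \<le> k" "k \<le> T"
  shows "pd k \<le> cap_d k 0"
proof -
  have "etad * (soc (k - 1) - Smin) / Dt \<le> (s_up (k - 1) - Smin) * etad / Dt"
    using soc_le_s_up[of "k - 1"] assms Dt_pos etad_pos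
    by (simp add: divide_right_mono mult.commute)
  then show ?thesis
    using pd_le_stored_energy[OF assms] pd_le_Pd_e[OF assms] unfolding dd_def pos_def by simp
qed

definition room_c :: "nat \<Rightarrow> real" where
  "room_c t = (Smax - s_low (t - 1)) / (Dt * etac)"

lemma room_c_bounds: "0 \<le> room_c t" "room_c t \<le> (Smax - Smin) / (Dt * etac)"
  using s_low_bounds[of "t - 1"] Dt_pos etac_pos unfolding room_c_def
  by (simp_all add: divide_right_mono)

lemma rhoc_eq_max_reserve:
  assumes "\<tau> \<le> n"
  shows "rhoc Dt etac etad Pd Pc Smin Smax s0 t \<tau> n
    = max (- cap_d (t + \<tau>) 0 / (etad * etac))
        (reserve Pc_e (room_c t) ((Smax - Smin) / (Dt * etac)) n \<tau>)"
proof -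
  have sum_cap_c: "(\<Sum>j<m. cap_c t j) = min (real m * Pc_e) (room_c t)" for m
    using sum_min_pos_slices[OF Pc_e_nonneg room_c_bounds(1)] unfolding cc_def room_c_def by simp
  have sum_cbar: "(\<Sum>j<m. cbar Dt etac etad Pd Pc Smin Smax s0 j)
      = min (real m * Pc_e) ((Smax - Smin) / (Dt * etac))" for m
    using sum_min_pos_slices[OF Pc_e_nonneg order.trans[OF room_c_bounds]] unfolding cbar_def by simp
  have "(\<Sum>j\<in>{\<tau>..n}. cap_c t j) = (\<Sum>j<Suc n. cap_c t j) - (\<Sum>j<\<tau>. cap_c t j)"
    using sum_diff_nat_ivl[of 0 \<tau> "Suc n" "cap_c t"] assms
    by (simp add: lessThan_atLeast0 atLeastLessThanSuc_atLeastAtMost)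
  then show ?thesis unfolding rhoc_def reserve_def sum_cap_c sum_cbar by simp
qed

lemma soc_increment:
  assumes "1 \<le> k" "k \<le> T"
  shows "(soc k - soc (k - 1)) / (Dt * etac) = pc k - pd k / (etad * etac)"
  unfolding feasible_at(8)[OF assms] using Dt_pos etac_pos etad_pos by (simp add: field_simps)

lemma charge_summand_le:
  assumes "1 \<le> t" "t + \<tau> \<le> T" "\<tau> \<le> n"
  shows "pc (t + \<tau>) + rhoc Dt etac etad Pd Pc Smin Smax s0 t \<tau> n * (1 - u (t + \<tau>))
    \<le> max ((soc (t + \<tau>) - soc (t + \<tau> - 1)) / (Dt * etac))
        (reserve Pc_e (room_c t) ((Smax - Smin) / (Dt * etac)) n \<tau>)"
proof -
  have k: "1 \<le> t + \<tau>" "t + \<tau> \<le> T" using assms by auto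
  consider "u (t + \<tau>) = 1" | "u (t + \<tau>) = 0" using feasible_at(3)[OF k] by blast
  then show ?thesis
  proof cases
    case 1
    then show ?thesis using soc_increment[OF k] pd_eq_0_if_charging[OF k] by simp
  next
    case 2
    moreover have "- cap_d (t + \<tau>) 0 / (etad * etac) \<le> - pd (t + \<tau>) / (etad * etac)"
      using pd_le_cap_d[OF k] etad_pos etac_pos by (simp add: divide_right_mono)
    ultimately show ?thesis
      using soc_increment[OF k] rhoc_eq_max_reserve[OF assms(3)] pc_eq_0_if_not_charging[OF k]
      by (auto simp: max_def)
  qed
qed

lemma charge_bound:
  assumes t: "1 \<le> t" "t + n \<le> T"
  shows "(\<Sum>\<tau>\<in>{0..n}. pc (t + \<tau>))
      + (\<Sum>\<tau>\<in>{0..n}. rhoc Dt etac etad Pd Pc Smin Smax s0 t \<tau> n * (1 - u (t + \<tau>)))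
    \<le> (\<Sum>\<tau>\<in>{0..n}. cap_c t \<tau>)"
proof -
  define f where "f \<tau> = soc (t + \<tau> - 1) / (Dt * etac)" for \<tau>
  have incr: "f (Suc \<tau>) - f \<tau> = (soc (t + \<tau>) - soc (t + \<tau> - 1)) / (Dt * etac)" for \<tau>
    unfolding f_def using t by (simp add: diff_divide_distrib)
  have soc_between: "Smin \<le> soc (t + \<tau> - 1)" "soc (t + \<tau> - 1) \<le> Smax" if "\<tau> \<le> Suc n" for \<tau>
    using soc_bounds[of "t + \<tau> - 1"] t that by simp_all
  have s_low_le: "s_low (t - 1) \<le> soc (t - 1)" using s_low_le_soc t by simp
  have "(\<Sum>\<tau>\<le>n. pc (t + \<tau>) + rhoc Dt etac etad Pd Pc Smin Smax s0 t \<tau> n * (1 - u (t + \<tau>)))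
      \<le> min (real (Suc n) * Pc_e) (room_c t)"
  proof (rule sum_le_min_of_telescoping_or_reserve[OF Pc_e_nonneg room_c_bounds])
    fix \<tau> assume "\<tau> \<le> n"
    then have k: "1 \<le> t + \<tau>" "t + \<tau> \<le> T" using t by auto
    have "0 \<le> pd (t + \<tau>) / (etad * etac)" using feasible_at(1)[OF k] etad_pos etac_pos by simp
    then show "f (Suc \<tau>) - f \<tau> \<le> Pc_e"
      unfolding incr soc_increment[OF k] using pc_le_Pc_e[OF k] by linarith
    show "pc (t + \<tau>) + rhoc Dt etac etad Pd Pc Smin Smax s0 t \<tau> n * (1 - u (t + \<tau>))
        \<le> max (f (Suc \<tau>) - f \<tau>) (reserve Pc_e (room_c t) ((Smax - Smin) / (Dt * etac)) n \<tau>)"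
      unfolding incr using charge_summand_le t \<open>\<tau> \<le> n\<close> by simp
  next
    fix m assume "m \<le> Suc n"
    then show "f m - f 0 \<le> room_c t"
      using soc_between[of m] s_low_le t Dt_pos etac_pos
      unfolding f_def room_c_def by (simp add: diff_divide_distrib[symmetric] divide_right_mono)
  next
    fix a b assume "a \<le> b" "b \<le> Suc n"
    then show "f b - f a \<le> (Smax - Smin) / (Dt * etac)"
      using soc_between[of a] soc_between[of b] Dt_pos etac_pos
      unfolding f_def by (simp add: diff_divide_distrib[symmetric] divide_right_mono)
  qed
  moreover have "(\<Sum>\<tau>\<le>n. cap_c t \<tau>) = min (real (Suc n) * Pc_e) (room_c t)"
    using sum_min_pos_slices[OF Pc_e_nonneg room_c_bounds(1)]
    unfolding cc_def room_c_def lessThan_Suc_atMost[symmetric] by simp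
  ultimately show ?thesis by (simp add: sum.distrib atLeast0AtMost)
qed

lemma discharge_bound:
  assumes "1 \<le> t" "t + n \<le> T"
  shows "(\<Sum>\<tau>\<in>{0..n}. pd (t + \<tau>))
      + (\<Sum>\<tau>\<in>{0..n}. rhod Dt etac etad Pd Pc Smin Smax s0 t \<tau> n * u (t + \<tau>))
    \<le> (\<Sum>\<tau>\<in>{0..n}. cap_d t \<tau>)"
proof -
  interpret mirror: storage_schedule T Dt "1 / etad" "1 / etac" Pc Pd "Smax - Smax" "Smax - Smin"
    "Smax - s0" pc pd "\<lambda>k. Smax - s k" "\<lambda>k. 1 - u k"
    using Dt_pos etac_pos etad_pos Pd_pos Pc_pos Smin_less_Smax s0_bounds
      in_P01_mirror[OF feasible order.refl]
    by unfold_locales simp_all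
  show ?thesis
    using mirror.charge_bound[OF assms, unfolded rhoc_mirror cc_mirror] by simp
qed

end

theorem mainTheorem6:
  fixes T :: nat and Dt etac etad Pd Pc Smin Smax s0 :: real
    and pd pc s u :: "nat \<Rightarrow> real" and t taub :: nat
  assumes "1 \<le> T" and "0 < Dt"
    and "0 < etac" and "etac \<le> 1" and "0 < etad" and "etad \<le> 1"
    and "0 < Pd" and "0 < Pc"
    and "Smin < Smax" and "Smin \<le> s0" and "s0 \<le> Smax"
    and "in_P01 T Dt etac etad Pd Pc Smin Smax s0 pd pc s u"
    and "1 \<le> t" and "t \<le> T" and "taub \<le> T - t"
  shows "((\<Sum>tau\<in>{0..taub}. pc (t + tau))
           + (\<Sum>tau\<in>{0..taub}. rhoc Dt etac etad Pd Pc Smin Smax s0 t tau taub * (1 - u (t + tau)))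
         \<le> (\<Sum>tau\<in>{0..taub}. cc Dt etac etad Pd Pc Smin Smax s0 t tau))
         \<and> ((\<Sum>tau\<in>{0..taub}. pd (t + tau))
           + (\<Sum>tau\<in>{0..taub}. rhod Dt etac etad Pd Pc Smin Smax s0 t tau taub * u (t + tau))
         \<le> (\<Sum>tau\<in>{0..taub}. dd Dt etac etad Pd Pc Smin Smax s0 t tau))"
proof -
  interpret storage_schedule T Dt etac etad Pd Pc Smin Smax s0 pd pc s u
    using assms by unfold_locales
  have "t + taub \<le> T" using assms by simp
  then show ?thesis using charge_bound discharge_bound \<open>1 \<le> t\<close> by blast
qed

end
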